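(* For all sufficiently large $n$, there is a nonempty set $\mathcal{A}\subsetneq\{0,1\}^n$ such that every first-order sentence over $\tau_{\mathsf{string}}$ that is true in $\mathbf{B}_w$ for all $w\in\mathcal{A}$ and false in $\mathbf{B}_{w'}$ for all $w'\in\{0,1\}^n\setminus\mathcal{A}$ has at least $n/\log_2 n$ quantifiers.
   Context: Vocabulary $\tau_{\mathsf{string}}=\langle <, S;\ \mathsf{min},\mathsf{max}\rangle$ with $<$ binary, $S$ unary, $\mathsf{min},\mathsf{max}$ constants. A string $w=w_1\cdots w_n\in\{0,1\}^n$ ($n\geq 1$) is encoded by the structure $\mathbf{B}_w$ with universe $\{1,\dots,n\}$, $<$ the usual order, $S=\{i: w_i=1\}$, $\mathsf{min}=1$, $\mathsf{max}=n$. The number of quantifiers is the number of quantifier occurrences. *)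

theory Defs
  imports Complex_Main
begin

text \<open>First-order logic over the vocabulary tau_string = (<, S; min, max), with equality.
  Variables are indexed by natural numbers.\<close>

datatype sterm = V nat | MinC | MaxC

datatype sfm =
    FTrue | FFalse
  | Eq sterm sterm
  | Less sterm sterm
  | Sat sterm
  | Neg sfm
  | Conj sfm sfm
  | Disj sfm sfm
  | Imp sfm sfm
  | Iff sfm sfm
  | Ex nat sfm
  | All nat sfm

fun tvars :: "sterm \<Rightarrow> nat set" where
  "tvars (V x) = {x}" | "tvars MinC = {}" | "tvars MaxC = {}"

fun freevars :: "sfm \<Rightarrow> nat set" where
  "freevars FTrue = {}"
| "freevars FFalse = {}"
| "freevars (Eq s t) = tvars s \<union> tvars t"
| "freevars (Less s t) = tvars s \<union> tvars t"
| "freevars (Sat t) = tvars t"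
| "freevars (Neg p) = freevars p"
| "freevars (Conj p q) = freevars p \<union> freevars q"
| "freevars (Disj p q) = freevars p \<union> freevars q"
| "freevars (Imp p q) = freevars p \<union> freevars q"
| "freevars (Iff p q) = freevars p \<union> freevars q"
| "freevars (Ex x p) = freevars p - {x}"
| "freevars (All x p) = freevars p - {x}"

definition sentence :: "sfm \<Rightarrow> bool" where
  "sentence p \<longleftrightarrow> freevars p = {}"

fun nquant :: "sfm \<Rightarrow> nat" where
  "nquant FTrue = 0"
| "nquant FFalse = 0"
| "nquant (Eq s t) = 0"
| "nquant (Less s t) = 0"
| "nquant (Sat t) = 0"
| "nquant (Neg p) = nquant p"
| "nquant (Conj p q) = nquant p + nquant q"
| "nquant (Disj p q) = nquant p + nquant q"
| "nquant (Imp p q) = nquant p + nquant q"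
| "nquant (Iff p q) = nquant p + nquant q"
| "nquant (Ex x p) = Suc (nquant p)"
| "nquant (All x p) = Suc (nquant p)"

text \<open>The structure B_w for a string w = w_1...w_n, represented as a bool list of length n
  (True = 1): universe {1..n}, usual order, S = {i. w_i = 1}, min = 1, max = n.
  Position i (1-based) holds w ! (i - 1).\<close>

fun teval :: "bool list \<Rightarrow> (nat \<Rightarrow> nat) \<Rightarrow> sterm \<Rightarrow> nat" where
  "teval w a (V x) = a x"
| "teval w a MinC = 1"
| "teval w a MaxC = length w"

fun holds :: "bool list \<Rightarrow> (nat \<Rightarrow> nat) \<Rightarrow> sfm \<Rightarrow> bool" where
  "holds w a FTrue = True"
| "holds w a FFalse = False"
| "holds w a (Eq s t) = (teval w a s = teval w a t)"
| "holds w a (Less s t) = (teval w a s < teval w a t)"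
| "holds w a (Sat t) = (let i = teval w a t in 1 \<le> i \<and> i \<le> length w \<and> w ! (i - 1))"
| "holds w a (Neg p) = (\<not> holds w a p)"
| "holds w a (Conj p q) = (holds w a p \<and> holds w a q)"
| "holds w a (Disj p q) = (holds w a p \<or> holds w a q)"
| "holds w a (Imp p q) = (holds w a p \<longrightarrow> holds w a q)"
| "holds w a (Iff p q) = (holds w a p \<longleftrightarrow> holds w a q)"
| "holds w a (Ex x p) = (\<exists>i\<in>{1..length w}. holds w (a(x := i)) p)"
| "holds w a (All x p) = (\<forall>i\<in>{1..length w}. holds w (a(x := i)) p)"

text \<open>Truth of a formula in B_w (for sentences the assignment is irrelevant; we use
  the constant assignment to min = 1, an element of the universe since n \<ge> 1).\<close>
definition models :: "bool list \<Rightarrow> sfm \<Rightarrow> bool" where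
  "models w p \<longleftrightarrow> holds w (\<lambda>_. 1) p"

end

theory Submission
  imports Defs "HOL-Real_Asymp.Real_Asymp"
begin

text \<open>A counting argument. After renaming, the variables of a sentence with q quantifiers are
  0, ..., q - 1. A formula over these variables is a Boolean combination of atomic formulas, whose
  truth depends only on the order type and the letters of the tuple (min, max, x_0, ..., x_{q-1}),
  and of maximal quantified subformulas, whose quantifier counts add up to q. Peeling off the
  quantifiers one at a time bounds the number of relations on strings of length n definable with
  at most q quantifiers by 2^(2^O(q log q)), independently of n. For q about n / log n this is less
  than the number 2^(2^n) - 2 of nonempty proper subsets of {0,1}^n.\<close>

section \<open>Variables and renaming\<close>

fun vars :: "sfm \<Rightarrow> nat set" where
  "vars FTrue = {}"
| "vars FFalse = {}"
| "vars (Eq s t) = tvars s \<union> tvars t"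
| "vars (Less s t) = tvars s \<union> tvars t"
| "vars (Sat t) = tvars t"
| "vars (Neg p) = vars p"
| "vars (Conj p q) = vars p \<union> vars q"
| "vars (Disj p q) = vars p \<union> vars q"
| "vars (Imp p q) = vars p \<union> vars q"
| "vars (Iff p q) = vars p \<union> vars q"
| "vars (Ex x p) = insert x (vars p)"
| "vars (All x p) = insert x (vars p)"

fun bound_vars :: "sfm \<Rightarrow> nat set" where
  "bound_vars (Neg p) = bound_vars p"
| "bound_vars (Conj p q) = bound_vars p \<union> bound_vars q"
| "bound_vars (Disj p q) = bound_vars p \<union> bound_vars q"
| "bound_vars (Imp p q) = bound_vars p \<union> bound_vars q"
| "bound_vars (Iff p q) = bound_vars p \<union> bound_vars q"
| "bound_vars (Ex x p) = insert x (bound_vars p)"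
| "bound_vars (All x p) = insert x (bound_vars p)"
| "bound_vars _ = {}"

lemma finite_tvars: "finite (tvars t)"
  by (cases t) auto

lemma finite_vars: "finite (vars p)"
  by (induction p) (auto simp: finite_tvars)

lemma finite_bound_vars: "finite (bound_vars p)"
  by (induction p) auto

lemma vars_subset_freevars_bound_vars: "vars p \<subseteq> freevars p \<union> bound_vars p"
  by (induction p) auto

lemma card_bound_vars_le_nquant: "card (bound_vars p) \<le> nquant p"
proof (induction p)
  case (Ex x p)
  then show ?case by (simp add: card_insert_if finite_bound_vars)
next
  case (All x p)
  then show ?case by (simp add: card_insert_if finite_bound_vars)
next
  case (Conj p q) then show ?case using card_Un_le[of "bound_vars p" "bound_vars q"] by simp
next
  case (Disj p q) then show ?case using card_Un_le[of "bound_vars p" "bound_vars q"] by simp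
next
  case (Imp p q) then show ?case using card_Un_le[of "bound_vars p" "bound_vars q"] by simp
next
  case (Iff p q) then show ?case using card_Un_le[of "bound_vars p" "bound_vars q"] by simp
qed auto

lemma teval_cong: "\<forall>x\<in>tvars t. a x = b x \<Longrightarrow> teval w a t = teval w b t"
  by (cases t) auto

lemma holds_cong: "\<forall>x\<in>vars p. a x = b x \<Longrightarrow> holds w a p = holds w b p"
proof (induction p arbitrary: a b)
  case (Eq s t)
  then show ?case using teval_cong[of s a b w] teval_cong[of t a b w] by simp
next
  case (Less s t)
  then show ?case using teval_cong[of s a b w] teval_cong[of t a b w] by simp
next
  case (Sat t)
  then show ?case using teval_cong[of t a b w] by simp
next
  case (Ex x p)
  have "holds w (a(x := i)) p = holds w (b(x := i)) p" for i
    using Ex.prems by (intro Ex.IH) auto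
  then show ?case by simp
next
  case (All x p)
  have "holds w (a(x := i)) p = holds w (b(x := i)) p" for i
    using All.prems by (intro All.IH) auto
  then show ?case by simp
qed (auto simp: ball_Un)

fun rename_term :: "(nat \<Rightarrow> nat) \<Rightarrow> sterm \<Rightarrow> sterm" where
  "rename_term f (V x) = V (f x)"
| "rename_term f MinC = MinC"
| "rename_term f MaxC = MaxC"

fun rename :: "(nat \<Rightarrow> nat) \<Rightarrow> sfm \<Rightarrow> sfm" where
  "rename f FTrue = FTrue"
| "rename f FFalse = FFalse"
| "rename f (Eq s t) = Eq (rename_term f s) (rename_term f t)"
| "rename f (Less s t) = Less (rename_term f s) (rename_term f t)"
| "rename f (Sat t) = Sat (rename_term f t)"
| "rename f (Neg p) = Neg (rename f p)"
| "rename f (Conj p q) = Conj (rename f p) (rename f q)"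
| "rename f (Disj p q) = Disj (rename f p) (rename f q)"
| "rename f (Imp p q) = Imp (rename f p) (rename f q)"
| "rename f (Iff p q) = Iff (rename f p) (rename f q)"
| "rename f (Ex x p) = Ex (f x) (rename f p)"
| "rename f (All x p) = All (f x) (rename f p)"

lemma vars_rename: "vars (rename f p) = f ` vars p"
proof -
  have "tvars (rename_term f t) = f ` tvars t" for t
    by (cases t) auto
  then show ?thesis
    by (induction p) auto
qed

lemma nquant_rename: "nquant (rename f p) = nquant p"
  by (induction p) auto

lemma teval_rename: "teval w a (rename_term f t) = teval w (a \<circ> f) t"
  by (cases t) auto

text \<open>Injectivity on all variables, bound ones included, rules out variable capture.\<close>

lemma holds_rename:
  "inj_on f (vars p) \<Longrightarrow> holds w a (rename f p) = holds w (a \<circ> f) p"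
proof (induction p arbitrary: a)
  case (Ex x p)
  have "holds w (a(f x := i)) (rename f p) = holds w ((a \<circ> f)(x := i)) p" for i
  proof -
    have "holds w (a(f x := i)) (rename f p) = holds w (a(f x := i) \<circ> f) p"
      using Ex by (intro Ex.IH) (auto intro: inj_on_subset)
    also have "\<dots> = holds w ((a \<circ> f)(x := i)) p"
      using Ex.prems by (intro holds_cong) (auto simp: inj_on_def)
    finally show ?thesis .
  qed
  then show ?case by (simp add: o_def)
next
  case (All x p)
  have "holds w (a(f x := i)) (rename f p) = holds w ((a \<circ> f)(x := i)) p" for i
  proof -
    have "holds w (a(f x := i)) (rename f p) = holds w (a(f x := i) \<circ> f) p"
      using All by (intro All.IH) (auto intro: inj_on_subset)
    also have "\<dots> = holds w ((a \<circ> f)(x := i)) p"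
      using All.prems by (intro holds_cong) (auto simp: inj_on_def)
    finally show ?thesis .
  qed
  then show ?case by (simp add: o_def)
qed (simp_all add: inj_on_Un teval_rename)

lemma sentence_rename_vars_below:
  assumes "sentence \<phi>"
  obtains \<psi> where "vars \<psi> \<subseteq> {..<nquant \<phi>}" "nquant \<psi> = nquant \<phi>"
    "\<And>w. holds w (\<lambda>_. 1) \<psi> = models w \<phi>"
proof -
  have "vars \<phi> \<subseteq> bound_vars \<phi>"
    using vars_subset_freevars_bound_vars[of \<phi>] assms by (auto simp: sentence_def)
  then have card: "card (vars \<phi>) \<le> nquant \<phi>"
    using card_mono[OF finite_bound_vars] card_bound_vars_le_nquant le_trans by blast
  obtain \<pi> where \<pi>: "bij_betw \<pi> (vars \<phi>) {..<card (vars \<phi>)}"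
    using bij_betw_iff_card[of "vars \<phi>" "{..<card (vars \<phi>)}"] finite_vars by auto
  show ?thesis
  proof (rule that[of "rename \<pi> \<phi>"])
    show "vars (rename \<pi> \<phi>) \<subseteq> {..<nquant \<phi>}"
      using \<pi> card by (auto simp: vars_rename bij_betw_def)
    show "nquant (rename \<pi> \<phi>) = nquant \<phi>"
      by (rule nquant_rename)
    show "holds w (\<lambda>_. 1) (rename \<pi> \<phi>) = models w \<phi>" for w
      using holds_rename[of \<pi> \<phi> w "\<lambda>_. 1"] \<pi> by (simp add: bij_betw_def models_def o_def)
  qed
qed

section \<open>Formulas as Boolean combinations of quantified formulas\<close>

definition configs :: "nat \<Rightarrow> nat \<Rightarrow> (bool list \<times> nat list) set" where
  "configs n k = {p. length (fst p) = n \<and> length (snd p) = k}"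

definition env :: "nat list \<Rightarrow> nat \<Rightarrow> nat" where
  "env vs x = (if x < length vs then vs ! x else 1)"

definition meaning :: "nat \<Rightarrow> nat \<Rightarrow> sfm \<Rightarrow> bool list \<times> nat list \<Rightarrow> bool" where
  "meaning n k \<phi> p \<longleftrightarrow> p \<in> configs n k \<and> holds (fst p) (env (snd p)) \<phi>"

definition points :: "bool list \<Rightarrow> nat list \<Rightarrow> nat list" where
  "points w vs = 1 # length w # vs"

definition rank_in :: "nat list \<Rightarrow> nat \<Rightarrow> nat" where
  "rank_in xs v = card {u \<in> set xs. u < v}"

definition letter :: "bool list \<Rightarrow> nat \<Rightarrow> bool" where
  "letter w i \<longleftrightarrow> 1 \<le> i \<and> i \<le> length w \<and> w ! (i - 1)"

definition atomic_type :: "bool list \<times> nat list \<Rightarrow> nat list \<times> bool list" where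
  "atomic_type p = (map (rank_in (points (fst p) (snd p))) (points (fst p) (snd p)),
                    map (letter (fst p)) (points (fst p) (snd p)))"

definition bool_comb :: "nat \<Rightarrow> nat \<Rightarrow> (nat list \<times> bool list \<Rightarrow> bool list \<Rightarrow> bool)
    \<Rightarrow> (bool list \<times> nat list \<Rightarrow> bool) list \<Rightarrow> bool list \<times> nat list \<Rightarrow> bool" where
  "bool_comb n k g cs p \<longleftrightarrow> p \<in> configs n k \<and> g (atomic_type p) (map (\<lambda>c. c p) cs)"

fun is_quantified :: "sfm \<Rightarrow> bool" where
  "is_quantified (Ex x p) = True"
| "is_quantified (All x p) = True"
| "is_quantified _ = False"

definition quantified_parts :: "nat \<Rightarrow> sfm list \<Rightarrow> bool" where
  "quantified_parts k \<psi>s \<longleftrightarrow> (\<forall>\<psi>\<in>set \<psi>s. is_quantified \<psi> \<and> vars \<psi> \<subseteq> {..<k})"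

text \<open>\<open>\<psi>s\<close> plays the role of the maximal quantified subformulas of \<open>\<phi>\<close>: the meaning of \<open>\<phi>\<close> is a
  Boolean function of the atomic type and of their meanings.\<close>

definition decomposes :: "nat \<Rightarrow> nat \<Rightarrow> sfm \<Rightarrow> sfm list \<Rightarrow> bool" where
  "decomposes n k \<phi> \<psi>s \<longleftrightarrow> quantified_parts k \<psi>s \<and> sum_list (map nquant \<psi>s) = nquant \<phi> \<and>
     (\<exists>g. meaning n k \<phi> = bool_comb n k g (map (meaning n k) \<psi>s))"

fun term_index :: "sterm \<Rightarrow> nat" where
  "term_index MinC = 0"
| "term_index MaxC = 1"
| "term_index (V x) = x + 2"

lemma rank_in_less_iff:
  assumes "u \<in> set xs" "v \<in> set xs"
  shows "rank_in xs u < rank_in xs v \<longleftrightarrow> u < v"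
proof
  assume "u < v"
  then have "{z \<in> set xs. z < u} \<subset> {z \<in> set xs. z < v}"
    using assms by auto
  then show "rank_in xs u < rank_in xs v"
    unfolding rank_in_def by (intro psubset_card_mono) auto
next
  assume "rank_in xs u < rank_in xs v"
  moreover have "\<not> u < v \<Longrightarrow> rank_in xs v \<le> rank_in xs u"
    unfolding rank_in_def by (intro card_mono) auto
  ultimately show "u < v" by linarith
qed

lemma rank_in_eq_iff:
  assumes "u \<in> set xs" "v \<in> set xs"
  shows "rank_in xs u = rank_in xs v \<longleftrightarrow> u = v"
  using rank_in_less_iff[OF assms] rank_in_less_iff[OF assms(2,1)]
  by (metis less_irrefl linorder_neqE_nat)

lemma rank_in_less_length: "v \<in> set xs \<Longrightarrow> rank_in xs v < length xs"
proof -
  assume v: "v \<in> set xs"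
  have "rank_in xs v \<le> card (set xs - {v})"
    unfolding rank_in_def by (intro card_mono) auto
  also have "\<dots> < card (set xs)"
    using v by (metis card_Diff1_less finite_set)
  also have "\<dots> \<le> length xs"
    by (rule card_length)
  finally show ?thesis .
qed

lemma teval_env:
  assumes "tvars t \<subseteq> {..<length vs}"
  shows "teval w (env vs) t = points w vs ! term_index t" "term_index t < length (points w vs)"
  using assms by (cases t; auto simp: env_def points_def)+

lemma atomic_type_nth:
  assumes "i < length (points (fst p) (snd p))"
  shows "fst (atomic_type p) ! i = rank_in (points (fst p) (snd p)) (points (fst p) (snd p) ! i)"
    "snd (atomic_type p) ! i = letter (fst p) (points (fst p) (snd p) ! i)"
  using assms by (simp_all add: atomic_type_def)

lemma holds_Sat: "holds w a (Sat t) \<longleftrightarrow> letter w (teval w a t)"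
  by (simp add: letter_def Let_def)

lemma atomic_type_determines_atoms:
  assumes "p \<in> configs n k" "tvars s \<subseteq> {..<k}" "tvars t \<subseteq> {..<k}"
  defines "val \<equiv> teval (fst p) (env (snd p))"
  shows "val s = val t \<longleftrightarrow> fst (atomic_type p) ! term_index s = fst (atomic_type p) ! term_index t"
    and "val s < val t \<longleftrightarrow> fst (atomic_type p) ! term_index s < fst (atomic_type p) ! term_index t"
    and "letter (fst p) (val t) \<longleftrightarrow> snd (atomic_type p) ! term_index t"
  using assms teval_env[of s "snd p" "fst p"] teval_env[of t "snd p" "fst p"]
  by (auto simp: configs_def atomic_type_nth rank_in_eq_iff rank_in_less_iff)

lemma decomposes_Nil:
  assumes "nquant \<phi> = 0"
    and "\<And>p. p \<in> configs n k \<Longrightarrow> holds (fst p) (env (snd p)) \<phi> = g (atomic_type p)"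
  shows "decomposes n k \<phi> []"
proof -
  have "meaning n k \<phi> = bool_comb n k (\<lambda>ty _. g ty) []"
    using assms(2) by (auto simp: fun_eq_iff meaning_def bool_comb_def)
  then show ?thesis
    using assms(1) by (auto simp: decomposes_def quantified_parts_def)
qed

lemma decomposes_quantified:
  assumes "is_quantified \<phi>" "vars \<phi> \<subseteq> {..<k}"
  shows "decomposes n k \<phi> [\<phi>]"
proof -
  have "meaning n k \<phi> = bool_comb n k (\<lambda>_ bs. hd bs) [meaning n k \<phi>]"
    by (simp add: fun_eq_iff bool_comb_def meaning_def)
  then show ?thesis
    using assms by (auto simp: decomposes_def quantified_parts_def)
qed

lemma decomposes_binary:
  assumes "decomposes n k p \<psi>s1" "decomposes n k q \<psi>s2" "nquant \<phi> = nquant p + nquant q"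
    and "\<And>x. x \<in> configs n k \<Longrightarrow> meaning n k \<phi> x = f (meaning n k p x) (meaning n k q x)"
  shows "decomposes n k \<phi> (\<psi>s1 @ \<psi>s2)"
proof -
  obtain g1 g2 where
    g1: "meaning n k p = bool_comb n k g1 (map (meaning n k) \<psi>s1)" and
    g2: "meaning n k q = bool_comb n k g2 (map (meaning n k) \<psi>s2)"
    using assms(1,2) by (auto simp: decomposes_def)
  let ?l = "length \<psi>s1"
  have "meaning n k \<phi> = bool_comb n k (\<lambda>ty bs. f (g1 ty (take ?l bs)) (g2 ty (drop ?l bs)))
      (map (meaning n k) (\<psi>s1 @ \<psi>s2))"
  proof
    fix x
    show "meaning n k \<phi> x = bool_comb n k (\<lambda>ty bs. f (g1 ty (take ?l bs)) (g2 ty (drop ?l bs)))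
      (map (meaning n k) (\<psi>s1 @ \<psi>s2)) x"
      using assms(4)[of x]
      by (cases "x \<in> configs n k") (auto simp: g1 g2 bool_comb_def meaning_def take_map drop_map)
  qed
  then show ?thesis
    using assms(1-3) by (auto simp: decomposes_def quantified_parts_def)
qed

lemma decomposes_exists: "vars \<phi> \<subseteq> {..<k} \<Longrightarrow> \<exists>\<psi>s. decomposes n k \<phi> \<psi>s"
proof (induction \<phi>)
  case FTrue
  have "decomposes n k FTrue []"
    by (rule decomposes_Nil[where g = "\<lambda>_. True"]) simp_all
  then show ?case ..
next
  case FFalse
  have "decomposes n k FFalse []"
    by (rule decomposes_Nil[where g = "\<lambda>_. False"]) simp_all
  then show ?case ..
next
  case (Eq s t)
  have "decomposes n k (Eq s t) []"
    by (rule decomposes_Nil[where g = "\<lambda>ty. fst ty ! term_index s = fst ty ! term_index t"])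
      (use Eq.prems in \<open>simp_all add: atomic_type_determines_atoms\<close>)
  then show ?case ..
next
  case (Less s t)
  have "decomposes n k (Less s t) []"
    by (rule decomposes_Nil[where g = "\<lambda>ty. fst ty ! term_index s < fst ty ! term_index t"])
      (use Less.prems in \<open>simp_all add: atomic_type_determines_atoms\<close>)
  then show ?case ..
next
  case (Sat t)
  have "decomposes n k (Sat t) []"
    by (rule decomposes_Nil[where g = "\<lambda>ty. snd ty ! term_index t"])
      (use Sat.prems in \<open>simp_all add: holds_Sat atomic_type_determines_atoms del: holds.simps\<close>)
  then show ?case ..
next
  case (Neg p)
  then obtain \<psi>s g where \<psi>s: "decomposes n k p \<psi>s"
    and g: "meaning n k p = bool_comb n k g (map (meaning n k) \<psi>s)"
    by (auto simp: decomposes_def)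
  have "meaning n k (Neg p) = bool_comb n k (\<lambda>ty bs. \<not> g ty bs) (map (meaning n k) \<psi>s)"
    using g unfolding fun_eq_iff meaning_def bool_comb_def by (simp only: holds.simps) blast
  then show ?case using \<psi>s by (auto simp: decomposes_def)
next
  case (Conj p q)
  then obtain \<psi>s1 \<psi>s2 where "decomposes n k p \<psi>s1" "decomposes n k q \<psi>s2" by auto
  then have "decomposes n k (Conj p q) (\<psi>s1 @ \<psi>s2)"
    by (rule decomposes_binary[where f = "(\<and>)"]) (auto simp: meaning_def)
  then show ?case ..
next
  case (Disj p q)
  then obtain \<psi>s1 \<psi>s2 where "decomposes n k p \<psi>s1" "decomposes n k q \<psi>s2" by auto
  then have "decomposes n k (Disj p q) (\<psi>s1 @ \<psi>s2)"
    by (rule decomposes_binary[where f = "(\<or>)"]) (auto simp: meaning_def)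
  then show ?case ..
next
  case (Imp p q)
  then obtain \<psi>s1 \<psi>s2 where "decomposes n k p \<psi>s1" "decomposes n k q \<psi>s2" by auto
  then have "decomposes n k (Imp p q) (\<psi>s1 @ \<psi>s2)"
    by (rule decomposes_binary[where f = "(\<longrightarrow>)"]) (auto simp: meaning_def)
  then show ?case ..
next
  case (Iff p q)
  then obtain \<psi>s1 \<psi>s2 where "decomposes n k p \<psi>s1" "decomposes n k q \<psi>s2" by auto
  then have "decomposes n k (Iff p q) (\<psi>s1 @ \<psi>s2)"
    by (rule decomposes_binary[where f = "(=)"]) (auto simp: meaning_def)
  then show ?case ..
next
  case (Ex x p)
  show ?case by (rule exI, rule decomposes_quantified) (use Ex.prems in simp_all)
next
  case (All x p)
  show ?case by (rule exI, rule decomposes_quantified) (use All.prems in simp_all)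
qed

section \<open>Counting meanings\<close>

definition atomic_types :: "nat \<Rightarrow> (nat list \<times> bool list) set" where
  "atomic_types k = {(r, b). set r \<subseteq> {..<k + 2} \<and> length r = k + 2 \<and> length b = k + 2}"

definition comb_inputs :: "nat \<Rightarrow> ((nat list \<times> bool list) \<times> bool list) set" where
  "comb_inputs k = atomic_types k \<times> {bs. length bs \<le> k}"

text \<open>Vanishing outside \<open>comb_inputs k\<close> makes this set finite at no loss of generality
  (\<open>bool_comb_restrict\<close>).\<close>

definition comb_funs :: "nat \<Rightarrow> (nat list \<times> bool list \<Rightarrow> bool list \<Rightarrow> bool) set" where
  "comb_funs k = {g. \<forall>ty bs. (ty, bs) \<notin> comb_inputs k \<longrightarrow> \<not> g ty bs}"

definition quant_meaning :: "nat \<Rightarrow> nat \<Rightarrow> bool \<Rightarrow> nat \<Rightarrow> (bool list \<times> nat list \<Rightarrow> bool)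
    \<Rightarrow> bool list \<times> nat list \<Rightarrow> bool" where
  "quant_meaning n k ex x e p \<longleftrightarrow> p \<in> configs n k \<and>
     (if ex then \<exists>i\<in>{1..n}. e (fst p, (snd p)[x := i]) else \<forall>i\<in>{1..n}. e (fst p, (snd p)[x := i]))"

definition meanings :: "nat \<Rightarrow> nat \<Rightarrow> nat \<Rightarrow> (bool list \<times> nat list \<Rightarrow> bool) set" where
  "meanings n k j = {meaning n k \<phi> | \<phi>. vars \<phi> \<subseteq> {..<k} \<and> nquant \<phi> \<le> j}"

definition qmeanings :: "nat \<Rightarrow> nat \<Rightarrow> nat \<Rightarrow> (bool list \<times> nat list \<Rightarrow> bool) set" where
  "qmeanings n k i = {meaning n k \<phi> | \<phi>. is_quantified \<phi> \<and> vars \<phi> \<subseteq> {..<k} \<and> nquant \<phi> = i}"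

definition qmeaning_lists :: "nat \<Rightarrow> nat \<Rightarrow> nat \<Rightarrow> (bool list \<times> nat list \<Rightarrow> bool) list set" where
  "qmeaning_lists n k j =
     {map (meaning n k) \<psi>s | \<psi>s. quantified_parts k \<psi>s \<and> sum_list (map nquant \<psi>s) \<le> j}"

lemma atomic_type_in_atomic_types: "p \<in> configs n k \<Longrightarrow> atomic_type p \<in> atomic_types k"
proof -
  assume "p \<in> configs n k"
  then have "length (points (fst p) (snd p)) = k + 2"
    by (simp add: points_def configs_def)
  then show ?thesis
    using rank_in_less_length[of _ "points (fst p) (snd p)"]
    by (auto simp: atomic_type_def atomic_types_def)
qed

lemma bool_comb_restrict:
  assumes "length cs \<le> k"
  shows "\<exists>g'\<in>comb_funs k. bool_comb n k g cs = bool_comb n k g' cs"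
  using assms atomic_type_in_atomic_types
  by (intro bexI[of _ "\<lambda>ty bs. (ty, bs) \<in> comb_inputs k \<and> g ty bs"])
    (auto simp: bool_comb_def comb_inputs_def comb_funs_def fun_eq_iff)

lemma nquant_pos_if_quantified: "is_quantified \<psi> \<Longrightarrow> 1 \<le> nquant \<psi>"
  by (cases \<psi>) auto

lemma length_le_sum_nquant: "quantified_parts k \<psi>s \<Longrightarrow> length \<psi>s \<le> sum_list (map nquant \<psi>s)"
  by (induction \<psi>s) (auto simp: quantified_parts_def dest: nquant_pos_if_quantified)

lemma env_update: "x < length vs \<Longrightarrow> (env vs)(x := i) = env (vs[x := i])"
  by (auto simp: env_def fun_eq_iff nth_list_update)

lemma meanings_subset:
  assumes "j \<le> k"
  shows "meanings n k j \<subseteq> (\<lambda>(g, cs). bool_comb n k g cs) ` (comb_funs k \<times> qmeaning_lists n k j)"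
proof
  fix e assume "e \<in> meanings n k j"
  then obtain \<phi> where \<phi>: "vars \<phi> \<subseteq> {..<k}" "nquant \<phi> \<le> j" "e = meaning n k \<phi>"
    by (auto simp: meanings_def)
  obtain \<psi>s g where \<psi>s: "quantified_parts k \<psi>s" "sum_list (map nquant \<psi>s) = nquant \<phi>"
    and g: "meaning n k \<phi> = bool_comb n k g (map (meaning n k) \<psi>s)"
    using decomposes_exists[OF \<phi>(1), of n] unfolding decomposes_def by blast
  have "length (map (meaning n k) \<psi>s) \<le> k"
    using length_le_sum_nquant[OF \<psi>s(1)] \<psi>s(2) \<phi>(2) assms by simp
  then obtain g' where "g' \<in> comb_funs k" "e = bool_comb n k g' (map (meaning n k) \<psi>s)"
    using bool_comb_restrict \<phi>(3) g by metis
  moreover have "map (meaning n k) \<psi>s \<in> qmeaning_lists n k j"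
    using \<psi>s \<phi>(2) by (auto simp: qmeaning_lists_def)
  ultimately show "e \<in> (\<lambda>(g, cs). bool_comb n k g cs) ` (comb_funs k \<times> qmeaning_lists n k j)"
    by force
qed

lemma qmeanings_subset:
  "qmeanings n k i \<subseteq> (\<lambda>(ex, x, e). quant_meaning n k ex x e) ` (UNIV \<times> {..<k} \<times> meanings n k (i - 1))"
proof
  fix c assume "c \<in> qmeanings n k i"
  then obtain \<phi> where \<phi>: "is_quantified \<phi>" "vars \<phi> \<subseteq> {..<k}" "nquant \<phi> = i" "c = meaning n k \<phi>"
    by (auto simp: qmeanings_def)
  show "c \<in> (\<lambda>(ex, x, e). quant_meaning n k ex x e) ` (UNIV \<times> {..<k} \<times> meanings n k (i - 1))"
  proof (cases \<phi>)
    case (Ex x \<psi>)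
    have "c = quant_meaning n k True x (meaning n k \<psi>)"
      using \<phi> Ex by (auto simp: fun_eq_iff quant_meaning_def meaning_def configs_def env_update)
    moreover have "meaning n k \<psi> \<in> meanings n k (i - 1)" "x < k"
      using \<phi> Ex by (auto simp: meanings_def)
    ultimately show ?thesis by force
  next
    case (All x \<psi>)
    have "c = quant_meaning n k False x (meaning n k \<psi>)"
      using \<phi> All by (auto simp: fun_eq_iff quant_meaning_def meaning_def configs_def env_update)
    moreover have "meaning n k \<psi> \<in> meanings n k (i - 1)" "x < k"
      using \<phi> All by (auto simp: meanings_def)
    ultimately show ?thesis by force
  qed (use \<phi> in simp_all)
qed

lemma qmeaning_lists_subset:
  "qmeaning_lists n k j \<subseteq>
     {[]} \<union> (\<Union>i\<in>{1..j}. (\<lambda>(c, cs). c # cs) ` (qmeanings n k i \<times> qmeaning_lists n k (j - i)))"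
proof
  fix cs assume "cs \<in> qmeaning_lists n k j"
  then obtain \<psi>s where \<psi>s: "quantified_parts k \<psi>s" "sum_list (map nquant \<psi>s) \<le> j"
    and cs: "cs = map (meaning n k) \<psi>s"
    by (auto simp: qmeaning_lists_def)
  show "cs \<in> {[]} \<union> (\<Union>i\<in>{1..j}. (\<lambda>(c, cs). c # cs) ` (qmeanings n k i \<times> qmeaning_lists n k (j - i)))"
  proof (cases \<psi>s)
    case Nil
    then show ?thesis using cs by simp
  next
    case (Cons \<psi> \<psi>s')
    let ?i = "nquant \<psi>"
    have "?i \<in> {1..j}"
      using \<psi>s Cons nquant_pos_if_quantified[of \<psi>] by (auto simp: quantified_parts_def)
    moreover have "meaning n k \<psi> \<in> qmeanings n k ?i"
      using \<psi>s Cons by (auto simp: qmeanings_def quantified_parts_def)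
    moreover have "map (meaning n k) \<psi>s' \<in> qmeaning_lists n k (j - ?i)"
      using \<psi>s Cons by (auto simp: qmeaning_lists_def quantified_parts_def)
    ultimately show ?thesis
      using cs Cons by force
  qed
qed

lemma finite_card_le_image_times:
  assumes "X \<subseteq> f ` (A \<times> B)" "finite A" "finite B"
  shows "finite X \<and> card X \<le> card A * card B"
proof -
  have "finite (f ` (A \<times> B))"
    using assms(2,3) by simp
  moreover have "card (f ` (A \<times> B)) \<le> card A * card B"
    using card_image_le[of "A \<times> B" f] assms(2,3) by (simp add: card_cartesian_product)
  ultimately show ?thesis
    using assms(1) by (meson card_mono finite_subset le_trans)
qed

lemma atomic_types_eq:
  "atomic_types k = {r. set r \<subseteq> {..<k + 2} \<and> length r = k + 2} \<times> {b::bool list. length b = k + 2}"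
  by (auto simp: atomic_types_def)

lemma card_bool_lists_length_eq: "card {bs::bool list. length bs = l} = 2 ^ l"
  using card_lists_length_eq[of "UNIV::bool set" l] by (simp add: card_UNIV_bool)

lemma finite_bool_lists_length_eq: "finite {bs::bool list. length bs = l}"
  using finite_lists_length_eq[of "UNIV::bool set" l] by simp

lemma finite_comb_inputs: "finite (comb_inputs k)"
proof -
  have "finite {r. set r \<subseteq> {..<k + 2} \<and> length r = k + 2}"
    by (rule finite_lists_length_eq) simp
  moreover have "finite {bs::bool list. length bs = k + 2}"
    by (rule finite_bool_lists_length_eq)
  moreover have "finite {bs::bool list. length bs \<le> k}"
    using finite_lists_length_le[of "UNIV::bool set"] by simp
  ultimately show ?thesis
    by (simp add: comb_inputs_def atomic_types_eq)
qed

definition comb_inputs_bound :: "nat \<Rightarrow> nat" where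
  "comb_inputs_bound k = (k + 2) ^ (k + 2) * 2 ^ (k + 2) * ((k + 1) * 2 ^ k)"

lemma card_comb_inputs: "card (comb_inputs k) \<le> comb_inputs_bound k"
proof -
  have types: "card (atomic_types k) = (k + 2) ^ (k + 2) * 2 ^ (k + 2)"
    using card_lists_length_eq[of "{..<k + 2}" "k + 2"]
    by (simp add: atomic_types_eq card_cartesian_product card_bool_lists_length_eq)
  have "{bs::bool list. length bs \<le> k} = (\<Union>l\<in>{..k}. {bs. length bs = l})"
    by auto
  then have "card {bs::bool list. length bs \<le> k} \<le> (\<Sum>l\<in>{..k}. card {bs::bool list. length bs = l})"
    by (simp add: card_UN_le)
  also have "\<dots> \<le> (\<Sum>l\<in>{..k}. 2 ^ k)"
    by (intro sum_mono) (simp add: card_bool_lists_length_eq power_increasing)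
  finally have "card {bs::bool list. length bs \<le> k} \<le> (k + 1) * 2 ^ k"
    by simp
  then show ?thesis
    unfolding comb_inputs_def comb_inputs_bound_def card_cartesian_product types
    by (rule mult_le_mono2)
qed

lemma card_comb_funs: "finite (comb_funs k) \<and> card (comb_funs k) \<le> 2 ^ card (comb_inputs k)"
proof -
  let ?graph = "\<lambda>g. {x \<in> comb_inputs k. g (fst x) (snd x)}"
  have inj: "inj_on ?graph (comb_funs k)"
  proof (rule inj_onI, intro ext)
    fix g h ty bs
    assume g: "g \<in> comb_funs k" and h: "h \<in> comb_funs k" and eq: "?graph g = ?graph h"
    show "g ty bs = h ty bs"
    proof (cases "(ty, bs) \<in> comb_inputs k")
      case True
      then show ?thesis
        using eq by (metis (no_types, lifting) fst_conv mem_Collect_eq snd_conv)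
    next
      case False
      then show ?thesis
        using g h unfolding comb_funs_def by blast
    qed
  qed
  have graph: "?graph ` comb_funs k \<subseteq> Pow (comb_inputs k)"
    by auto
  have "finite (comb_funs k)"
    using inj_on_finite[OF inj graph] finite_comb_inputs by simp
  moreover have "card (comb_funs k) \<le> card (Pow (comb_inputs k))"
    using card_inj_on_le[OF inj graph] finite_comb_inputs by simp
  ultimately show ?thesis
    using finite_comb_inputs by (simp add: card_Pow)
qed

lemma one_add_mult_power_le:
  fixes A D j :: nat
  assumes "j * A + 1 \<le> D"
  shows "1 + j * (A * D ^ (j - 1)) \<le> D ^ j"
proof (cases j)
  case (Suc m)
  have "1 \<le> D ^ m"
    using assms by simp
  then have "1 + j * (A * D ^ m) \<le> D ^ m + j * A * D ^ m"
    by (simp add: mult.assoc)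
  also have "\<dots> = (j * A + 1) * D ^ m"
    by (simp add: algebra_simps)
  also have "\<dots> \<le> D * D ^ m"
    using assms by (rule mult_le_mono1)
  finally show ?thesis
    using Suc by simp
qed simp

lemma card_qmeanings_le:
  assumes "1 \<le> i" "i - 1 \<le> k" "finite (qmeaning_lists n k (i - 1))"
  shows "finite (qmeanings n k i) \<and>
    card (qmeanings n k i) \<le> 2 * k * card (comb_funs k) * card (qmeaning_lists n k (i - 1))"
proof -
  have "finite (comb_funs k)"
    using card_comb_funs by blast
  then have M: "finite (meanings n k (i - 1))"
    "card (meanings n k (i - 1)) \<le> card (comb_funs k) * card (qmeaning_lists n k (i - 1))"
    using assms by (auto dest: finite_card_le_image_times[OF meanings_subset])
  have Q: "finite (qmeanings n k i) \<and>
      card (qmeanings n k i) \<le> card (UNIV :: bool set) * card ({..<k} \<times> meanings n k (i - 1))"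
    using M(1) by (intro finite_card_le_image_times[OF qmeanings_subset]) auto
  then have "card (qmeanings n k i) \<le> card (UNIV :: bool set) * card ({..<k} \<times> meanings n k (i - 1))"
    by (rule conjunct2)
  also have "\<dots> = 2 * k * card (meanings n k (i - 1))"
    by (simp add: card_cartesian_product card_UNIV_bool)
  also have "\<dots> \<le> 2 * k * card (comb_funs k) * card (qmeaning_lists n k (i - 1))"
    using M(2) by (simp add: mult.assoc)
  finally show ?thesis
    using Q by simp
qed

text \<open>Writing \<open>F = qmeaning_lists n k\<close> and \<open>Q = qmeanings n k\<close>, splitting off the first
  quantified part gives
  \<open>|F j| \<le> 1 + (\<Sum>i=1..j. |Q i| * |F (j - i)|)\<close> with \<open>|Q i| \<le> 2 k |comb_funs k| |F (i - 1)|\<close>; because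
  the quantifier counts add up, this stays singly exponential in \<open>j\<close>.\<close>

lemma card_qmeaning_lists:
  assumes "j \<le> k"
  shows "finite (qmeaning_lists n k j) \<and>
    card (qmeaning_lists n k j) \<le> (k * (2 * k * card (comb_funs k)) + 1) ^ j"
  using assms
proof (induction j rule: less_induct)
  case (less j)
  define A where "A = 2 * k * card (comb_funs k)"
  define D where "D = k * A + 1"
  have IH: "finite (qmeaning_lists n k j') \<and> card (qmeaning_lists n k j') \<le> D ^ j'" if "j' < j" for j'
    using less.IH[of j'] that less.prems unfolding D_def A_def by simp
  have Q: "finite (qmeanings n k i) \<and> card (qmeanings n k i) \<le> A * D ^ (i - 1)" if i: "i \<in> {1..j}" for i
  proof -
    have F: "finite (qmeaning_lists n k (i - 1))" "card (qmeaning_lists n k (i - 1)) \<le> D ^ (i - 1)"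
      using IH[of "i - 1"] i by auto
    have "finite (qmeanings n k i) \<and> card (qmeanings n k i) \<le> A * card (qmeaning_lists n k (i - 1))"
      using card_qmeanings_le[of i k n] F(1) i less.prems unfolding A_def by auto
    then show ?thesis
      using mult_le_mono2[OF F(2), of A] by (blast intro: le_trans)
  qed
  let ?C = "\<lambda>i. (\<lambda>(c, cs). c # cs) ` (qmeanings n k i \<times> qmeaning_lists n k (j - i))"
  have C: "finite (?C i) \<and> card (?C i) \<le> A * D ^ (j - 1)" if i: "i \<in> {1..j}" for i
  proof -
    have C0: "finite (?C i) \<and> card (?C i) \<le> card (qmeanings n k i) * card (qmeaning_lists n k (j - i))"
      using Q[OF i] IH[of "j - i"] i by (intro finite_card_le_image_times[OF subset_refl]) auto
    have "card (qmeanings n k i) * card (qmeaning_lists n k (j - i)) \<le> A * D ^ (i - 1) * D ^ (j - i)"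
      using Q[OF i] IH[of "j - i"] i by (intro mult_le_mono) auto
    also have "\<dots> = A * D ^ (j - 1)"
      using i by (simp add: mult.assoc flip: power_add)
    finally show ?thesis
      using C0 by linarith
  qed
  let ?U = "{[]} \<union> (\<Union>i\<in>{1..j}. ?C i)"
  have fin: "finite ?U"
    using C by auto
  have sub: "qmeaning_lists n k j \<subseteq> ?U"
    by (rule qmeaning_lists_subset)
  have "card (qmeaning_lists n k j) \<le> card ?U"
    by (rule card_mono[OF fin sub])
  also have "\<dots> \<le> 1 + card (\<Union>i\<in>{1..j}. ?C i)"
    using card_Un_le[of "{[]}" "\<Union>i\<in>{1..j}. ?C i"] by simp
  also have "\<dots> \<le> 1 + (\<Sum>i\<in>{1..j}. card (?C i))"
    using card_UN_le[of "{1..j}" ?C] by simp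
  also have "\<dots> \<le> 1 + j * (A * D ^ (j - 1))"
    using sum_mono[of "{1..j}" "\<lambda>i. card (?C i)" "\<lambda>_. A * D ^ (j - 1)"] C by simp
  also have "\<dots> \<le> D ^ j"
    using less.prems by (intro one_add_mult_power_le) (simp add: D_def)
  finally show ?case
    using finite_subset[OF sub fin] unfolding D_def A_def by simp
qed

lemma comb_inputs_bound_large: "2 * k ^ 2 + 1 \<le> 2 ^ comb_inputs_bound k"
proof -
  have "k ^ 2 \<le> (2 ^ k) ^ 2"
    using less_exp[of k] by (intro power_mono) auto
  then have "k ^ 2 \<le> 2 ^ (2 * k)"
    by (simp add: power_mult[symmetric] mult.commute)
  moreover have "(1::nat) \<le> 2 ^ (2 * k)"
    by simp
  ultimately have "2 * k ^ 2 + 1 \<le> 4 * 2 ^ (2 * k)"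
    by linarith
  also have "\<dots> = 2 ^ (2 * k + 2)"
    by (simp add: power_add)
  also have "(2::nat) ^ (2 * k + 2) = 1 * 2 ^ (k + 2) * (1 * 2 ^ k)"
    by (simp flip: power_add)
  also have "\<dots> \<le> comb_inputs_bound k"
    unfolding comb_inputs_bound_def by (intro mult_le_mono mult_le_mono1) (auto simp: Suc_le_eq)
  also have "\<dots> \<le> 2 ^ comb_inputs_bound k"
    using less_exp less_imp_le by blast
  finally show ?thesis .
qed

lemma card_meanings:
  "finite (meanings n k k) \<and> card (meanings n k k) \<le> 2 ^ (comb_inputs_bound k * (2 * k + 1))"
proof -
  define s where "s = comb_inputs_bound k"
  have funs: "finite (comb_funs k)" "card (comb_funs k) \<le> 2 ^ s"
    using card_comb_funs[of k] card_comb_inputs[of k] power_increasing[of _ s "2::nat"]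
    by (auto simp: s_def intro: order_trans)
  have lists: "finite (qmeaning_lists n k k)"
    "card (qmeaning_lists n k k) \<le> (k * (2 * k * card (comb_funs k)) + 1) ^ k"
    using card_qmeaning_lists[of k k n] by auto
  have "k * (2 * k * card (comb_funs k)) + 1 \<le> 2 * k ^ 2 * 2 ^ s + 1"
    using funs(2) by (simp add: power2_eq_square mult.assoc)
  also have "\<dots> \<le> 2 ^ s * 2 ^ s"
    using comb_inputs_bound_large[of k] mult_le_mono1[of "2 * k ^ 2 + 1" "2 ^ s" "2 ^ s"]
    by (simp add: s_def algebra_simps)
  also have "\<dots> = 2 ^ (2 * s)"
    by (simp flip: power_add)
  finally have base: "k * (2 * k * card (comb_funs k)) + 1 \<le> 2 ^ (2 * s)" .
  have "finite (meanings n k k) \<and>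
      card (meanings n k k) \<le> card (comb_funs k) * card (qmeaning_lists n k k)"
    using funs(1) lists(1) by (intro finite_card_le_image_times[OF meanings_subset]) auto
  moreover have "card (comb_funs k) * card (qmeaning_lists n k k) \<le> 2 ^ s * (2 ^ (2 * s)) ^ k"
    using funs(2) lists(2) power_mono[OF base, of k] by (intro mult_le_mono) auto
  moreover have "(2::nat) ^ s * (2 ^ (2 * s)) ^ k = 2 ^ (s * (2 * k + 1))"
    by (simp add: power_mult[symmetric] power_add[symmetric] algebra_simps)
  ultimately show ?thesis
    unfolding s_def by linarith
qed

definition definable_langs :: "nat \<Rightarrow> nat \<Rightarrow> bool list set set" where
  "definable_langs n q = {{w. length w = n \<and> models w \<phi>} | \<phi>. sentence \<phi> \<and> nquant \<phi> \<le> q}"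

lemma card_definable_langs:
  "finite (definable_langs n q) \<and> card (definable_langs n q) \<le> 2 ^ (comb_inputs_bound q * (2 * q + 1))"
proof -
  let ?lang = "\<lambda>e. {w. length w = n \<and> e (w, replicate q 1)}"
  have sub: "definable_langs n q \<subseteq> ?lang ` meanings n q q"
  proof
    fix L assume "L \<in> definable_langs n q"
    then obtain \<phi> where \<phi>: "sentence \<phi>" "nquant \<phi> \<le> q" and L: "L = {w. length w = n \<and> models w \<phi>}"
      by (auto simp: definable_langs_def)
    obtain \<psi> where \<psi>: "vars \<psi> \<subseteq> {..<nquant \<phi>}" "nquant \<psi> = nquant \<phi>"
      "\<And>w. holds w (\<lambda>_. 1) \<psi> = models w \<phi>"
      using sentence_rename_vars_below[OF \<phi>(1)] by blast
    have "env (replicate q 1) = (\<lambda>_. 1)"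
      by (auto simp: env_def)
    then have "L = ?lang (meaning n q \<psi>)"
      using L \<psi>(3) by (auto simp: meaning_def configs_def)
    moreover have "meaning n q \<psi> \<in> meanings n q q"
      using \<psi>(1,2) \<phi>(2) by (auto simp: meanings_def intro!: exI[of _ \<psi>])
    ultimately show "L \<in> ?lang ` meanings n q q"
      by blast
  qed
  have "finite (meanings n q q)" "card (?lang ` meanings n q q) \<le> card (meanings n q q)"
    using card_meanings[of n q] card_image_le by blast+
  then show ?thesis
    using card_meanings[of n q] card_mono[OF _ sub] finite_subset[OF sub] by fastforce
qed

lemma definable_langsI:
  assumes "sentence \<phi>" "nquant \<phi> \<le> q" "A \<subseteq> {w. length w = n}"
    and "\<forall>w\<in>A. models w \<phi>" "\<forall>w'. length w' = n \<and> w' \<notin> A \<longrightarrow> \<not> models w' \<phi>"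
  shows "A \<in> definable_langs n q"
proof -
  have "A = {w. length w = n \<and> models w \<phi>}"
    using assms(3-5) by blast
  then show ?thesis
    using assms(1,2) unfolding definable_langs_def by blast
qed

lemma ex_nonempty_proper_subset_notin:
  assumes "finite S" "finite F" "card F + 2 < 2 ^ card S"
  shows "\<exists>A. A \<noteq> {} \<and> A \<subset> S \<and> A \<notin> F"
proof (rule ccontr)
  assume "\<not> ?thesis"
  then have "Pow S \<subseteq> F \<union> {{}, S}"
    by auto
  then have "card (Pow S) \<le> card (F \<union> {{}, S})"
    using assms(2) by (intro card_mono) auto
  also have "\<dots> \<le> card F + 2"
    using card_Un_le[of F "{{}, S}"] by (cases "S = {}") auto
  finally show False
    using assms by (simp add: card_Pow)
qed

section \<open>Asymptotics and the main theorem\<close>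

lemma two_pow_add_two_less:
  fixes e n :: nat
  assumes "e < 2 ^ (n - 1)" "2 \<le> n"
  shows "2 ^ e + 2 < (2::nat) ^ 2 ^ n"
proof -
  let ?X = "(2::nat) ^ 2 ^ (n - 1)"
  have "2 ^ e < ?X"
    using assms(1) by (intro power_strict_increasing) auto
  moreover have "(2::nat) ^ 1 \<le> 2 ^ (n - 1)"
    using assms(2) by (intro power_increasing) auto
  then have "(2::nat) ^ 2 \<le> ?X"
    by (intro power_increasing) auto
  then have "4 * ?X \<le> ?X * ?X"
    using mult_le_mono1[of "2 ^ 2" ?X ?X] by simp
  moreover have "(2::nat) ^ n = 2 ^ (n - 1) + 2 ^ (n - 1)"
    using assms(2) by (cases n) auto
  then have "(2::nat) ^ 2 ^ n = ?X * ?X"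
    by (simp only: power_add)
  ultimately show ?thesis
    by linarith
qed

text \<open>The exponent \<open>comb_inputs_bound q * (2 q + 1)\<close> of \<open>card_meanings\<close>, extended to real
  arguments so that \<open>real_asymp\<close> applies.\<close>

definition count_bound_real :: "real \<Rightarrow> real" where
  "count_bound_real y = (y + 2) powr (y + 2) * 2 powr (2 * y + 2) * (y + 1) * (2 * y + 1)"

lemma count_bound_le_real:
  assumes "real q \<le> y"
  shows "real (comb_inputs_bound q * (2 * q + 1)) \<le> count_bound_real y"
proof -
  define x where "x = real q"
  have x: "0 \<le> x" "x \<le> y"
    using assms by (simp_all add: x_def)
  have pow: "real ((q + 2) ^ (q + 2)) = (x + 2) powr (x + 2)"
  proof -
    have "(x + 2) powr (x + 2) = (x + 2) powr (real (q + 2))"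
      by (simp only: x_def of_nat_add of_nat_numeral)
    also have "\<dots> = (x + 2) ^ (q + 2)"
      by (rule powr_realpow) (simp add: x_def)
    also have "\<dots> = real ((q + 2) ^ (q + 2))"
      by (simp only: x_def of_nat_add of_nat_numeral of_nat_power)
    finally show ?thesis by simp
  qed
  have exp2: "real (2 ^ (q + 2) * 2 ^ q) = 2 powr (2 * x + 2)"
  proof -
    have "(2::nat) ^ (q + 2) * 2 ^ q = 2 ^ (2 * q + 2)"
      by (simp flip: power_add)
    then have "real (2 ^ (q + 2) * 2 ^ q) = (2::real) ^ (2 * q + 2)"
      by (metis of_nat_numeral of_nat_power)
    also have "\<dots> = 2 powr (real (2 * q + 2))"
      by (rule powr_realpow[symmetric]) simp
    also have "real (2 * q + 2) = 2 * x + 2"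
      by (simp add: x_def)
    finally show ?thesis .
  qed
  have "comb_inputs_bound q * (2 * q + 1) = (q + 2) ^ (q + 2) * (2 ^ (q + 2) * 2 ^ q) * (q + 1) * (2 * q + 1)"
    unfolding comb_inputs_bound_def by (simp only: ac_simps)
  then have "real (comb_inputs_bound q * (2 * q + 1)) =
      real ((q + 2) ^ (q + 2)) * real (2 ^ (q + 2) * 2 ^ q) * (x + 1) * (2 * x + 1)"
    by (simp only: of_nat_mult x_def of_nat_add of_nat_1 of_nat_numeral)
  also have "\<dots> = (x + 2) powr (x + 2) * 2 powr (2 * x + 2) * (x + 1) * (2 * x + 1)"
    by (simp only: pow exp2)
  also have "\<dots> \<le> count_bound_real y"
    unfolding count_bound_real_def
  proof (intro mult_mono)
    have "(x + 2) powr (x + 2) \<le> (y + 2) powr (x + 2)"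
      using x by (intro powr_mono2) auto
    also have "\<dots> \<le> (y + 2) powr (y + 2)"
      using x by (intro powr_mono) auto
    finally show "(x + 2) powr (x + 2) \<le> (y + 2) powr (y + 2)" .
  qed (use x in auto)
  finally show ?thesis .
qed

lemma eventually_count_bound_lt_subsets:
  "\<exists>N. \<forall>n\<ge>N. 2 ^ (comb_inputs_bound (nat \<lfloor>real n / log 2 (real n)\<rfloor>)
      * (2 * nat \<lfloor>real n / log 2 (real n)\<rfloor> + 1)) + 2 < (2::nat) ^ 2 ^ n"
proof -
  have "eventually (\<lambda>x::real. count_bound_real (x / log 2 x) < 2 powr (x - 1)) at_top"
    unfolding count_bound_real_def by real_asymp
  then obtain N0 where N0: "\<And>x. x \<ge> N0 \<Longrightarrow> count_bound_real (x / log 2 x) < 2 powr (x - 1)"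
    by (auto simp: eventually_at_top_linorder)
  have "2 ^ (comb_inputs_bound q * (2 * q + 1)) + 2 < (2::nat) ^ 2 ^ n"
    if n: "max 2 (nat \<lceil>N0\<rceil>) \<le> n" and q: "q = nat \<lfloor>real n / log 2 (real n)\<rfloor>" for n q
  proof -
    have n2: "2 \<le> n" and nN0: "N0 \<le> real n"
      using n by linarith+
    define e where "e = comb_inputs_bound q * (2 * q + 1)"
    have "real q \<le> real n / log 2 (real n)"
      unfolding q using n2 by (intro of_nat_floor divide_nonneg_nonneg) auto
    then have "real e \<le> count_bound_real (real n / log 2 (real n))"
      unfolding e_def by (rule count_bound_le_real)
    also have "\<dots> < 2 powr (real n - 1)"
      using nN0 by (intro N0)
    also have "\<dots> = real (2 ^ (n - 1))"
    proof -
      have minus: "real n - 1 = real (n - 1)"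
        using n2 by linarith
      have "(2::real) powr (real (n - 1)) = 2 ^ (n - 1)"
        by (rule powr_realpow) simp
      then show ?thesis
        unfolding minus by simp
    qed
    finally have "e < 2 ^ (n - 1)"
      by (simp only: of_nat_less_iff)
    then show ?thesis
      unfolding e_def using n2 by (rule two_pow_add_two_less)
  qed
  then show ?thesis
    by blast
qed

theorem mainTheorem20:
  "\<exists>N::nat. \<forall>n\<ge>N. \<exists>A::bool list set.
     A \<noteq> {} \<and> A \<subset> {w. length w = n} \<and>
     (\<forall>\<phi>. sentence \<phi> \<and> (\<forall>w\<in>A. models w \<phi>)
          \<and> (\<forall>w'. length w' = n \<and> w' \<notin> A \<longrightarrow> \<not> models w' \<phi>)
        \<longrightarrow> real (nquant \<phi>) \<ge> real n / log 2 (real n))"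
proof -
  obtain N where N: "\<And>n. N \<le> n \<Longrightarrow> 2 ^ (comb_inputs_bound (nat \<lfloor>real n / log 2 (real n)\<rfloor>)
      * (2 * nat \<lfloor>real n / log 2 (real n)\<rfloor> + 1)) + 2 < (2::nat) ^ 2 ^ n"
    using eventually_count_bound_lt_subsets by blast
  show ?thesis
  proof (intro exI[of _ N] allI impI, goal_cases)
    case (1 n)
    define q where "q = nat \<lfloor>real n / log 2 (real n)\<rfloor>"
    have "card (definable_langs n q) + 2 < 2 ^ card {w::bool list. length w = n}"
      using card_definable_langs[of n q] N[OF 1, folded q_def]
      unfolding card_bool_lists_length_eq by linarith
    from ex_nonempty_proper_subset_notin[OF finite_bool_lists_length_eq conjunct1[OF card_definable_langs] this]
    obtain A where A: "A \<noteq> {}" "A \<subset> {w. length w = n}" "A \<notin> definable_langs n q"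
      by blast
    have "real n / log 2 (real n) \<le> real (nquant \<phi>)"
      if \<phi>: "sentence \<phi>" "\<forall>w\<in>A. models w \<phi>" "\<forall>w'. length w' = n \<and> w' \<notin> A \<longrightarrow> \<not> models w' \<phi>" for \<phi>
    proof (rule ccontr)
      assume "\<not> real n / log 2 (real n) \<le> real (nquant \<phi>)"
      then have "nquant \<phi> \<le> q"
        unfolding q_def by (intro le_nat_floor) linarith
      moreover have "A \<subseteq> {w. length w = n}"
        using A(2) by (rule psubset_imp_subset)
      ultimately have "A \<in> definable_langs n q"
        using \<phi> by (intro definable_langsI)
      with A(3) show False ..
    qed
    then show ?case
      using A by blast
  qed
qed

end
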